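(* Let $\mathcal{F}$ be a $(G,[k_1,\dots,k_t],\lambda)$ Hadamard partitioned difference family. Then (i) $k_1+\cdots+k_t=2\lambda$; (ii) $k_1^2+\cdots+k_t^2=\lambda(2\lambda+1)$; (iii) $\lambda$ is even, hence $|G|\equiv 0 \pmod 4$.
   Context: $G$ is a finite group written additively, with difference $x-y:=x+(-y)$. For $B\subseteq G$, $\Delta B$ is the multiset $\{x-y: x,y\in B, x\neq y\}$; for $\mathcal{F}=\{B_1,\dots,B_t\}$, $\Delta\mathcal{F}$ is the multiset union of the $\Delta B_i$. $\mathcal{F}$ is a $(G,[k_1,\dots,k_t],\lambda)$ partitioned difference family (PDF) if the $B_i$ partition $G$, $|B_i|=k_i$, and $\Delta\mathcal{F}$ contains every non-zero element of $G$ exactly $\lambda$ times. It is Hadamard (HPDF) if $|G|=2\lambda$. *)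

theory Defs
  imports Main "HOL-Library.Multiset"
begin

definition diff_mset :: "'a::group_add set \<Rightarrow> 'a multiset" where
  "diff_mset B = image_mset (\<lambda>(x, y). x - y) (mset_set {(x, y). x \<in> B \<and> y \<in> B \<and> x \<noteq> y})"

definition diff_mset_family :: "nat \<Rightarrow> (nat \<Rightarrow> 'a::group_add set) \<Rightarrow> 'a multiset" where
  "diff_mset_family t B = (\<Sum>i<t. diff_mset (B i))"

definition is_PDF :: "nat \<Rightarrow> (nat \<Rightarrow> 'a::{group_add,finite} set) \<Rightarrow> (nat \<Rightarrow> nat) \<Rightarrow> nat \<Rightarrow> bool" where
  "is_PDF t B k lam \<longleftrightarrow>
     (\<forall>i<t. B i \<noteq> {}) \<and>
     (\<forall>i<t. \<forall>j<t. i \<noteq> j \<longrightarrow> B i \<inter> B j = {}) \<and>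
     (\<Union>i<t. B i) = UNIV \<and>
     (\<forall>i<t. card (B i) = k i) \<and>
     (\<forall>g. g \<noteq> 0 \<longrightarrow> count (diff_mset_family t B) g = lam)"

definition is_HPDF :: "nat \<Rightarrow> (nat \<Rightarrow> 'a::{group_add,finite} set) \<Rightarrow> (nat \<Rightarrow> nat) \<Rightarrow> nat \<Rightarrow> bool" where
  "is_HPDF t B k lam \<longleftrightarrow> is_PDF t B k lam \<and> card (UNIV :: 'a set) = 2 * lam"

end

theory Submission
  imports Defs "HOL-Library.Z2" "HOL-Library.Disjoint_Sets"
begin

(* Since the blocks partition G, the block sizes add up to |G| = 2\<lambda>. Counting the ordered
   pairs of distinct elements lying in a common block once by blocks and once by their
   difference gives \<Sum> k_i (k_i - 1) = \<lambda> (|G| - 1), which yields (ii). For (iii), |G| is even,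
   so G has an element g of order 2; as y - x = -g = g whenever x - y = g, the swap
   (x, y) \<mapsto> (y, x) pairs off the \<lambda> representations of g, so \<lambda> is even. *)

lemma even_card_if_fixpoint_free_involution:
  assumes "\<And>x. x \<in> X \<Longrightarrow> h x \<in> X" "\<And>x. x \<in> X \<Longrightarrow> h (h x) = x"
    and "\<And>x. x \<in> X \<Longrightarrow> h x \<noteq> x"
  shows "even (card X)"
proof -
  have "(\<Sum>x\<in>X. 1 :: bit) = 0"
    by (rule sum_involution_eq_0[where h = h]) (use assms in auto)
  then have "even (of_nat (card X) :: bit)"
    by simp
  then show ?thesis
    by (simp only: even_of_nat_iff)
qed

lemma size_eq_sum_count:
  assumes "finite A" "set_mset M \<subseteq> A"
  shows "size M = (\<Sum>x\<in>A. count M x)"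
  using assms
  by (simp add: size_multiset_overloaded_eq) (rule sum.mono_neutral_left; auto simp: not_in_iff)

lemma exists_order_two_if_even_card:
  assumes "even (card (UNIV :: 'a set))"
  obtains g :: "'a::{group_add,finite}" where "g \<noteq> 0" "- g = g"
proof -
  have "even (card {g::'a. - g \<noteq> g})"
    by (rule even_card_if_fixpoint_free_involution[where h = uminus]) auto
  moreover have "odd (card (UNIV - {0::'a}))"
    using assms finite_UNIV_card_ge_0 by (simp add: card_Diff_subset)
  ultimately have "{g::'a. - g \<noteq> g} \<noteq> UNIV - {0}"
    by metis
  then show ?thesis
    using that by auto
qed

lemma count_diff_mset:
  fixes B :: "'a::group_add set"
  assumes "finite B"
  shows "count (diff_mset B) g = card {(x, y). x \<in> B \<and> y \<in> B \<and> x \<noteq> y \<and> x - y = g}"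
proof -
  let ?P = "{(x, y). x \<in> B \<and> y \<in> B \<and> x \<noteq> y}"
  have "finite ?P"
    using assms by (auto intro: finite_subset[of _ "B \<times> B"])
  then have "count (diff_mset B) g = (\<Sum>p\<in>(\<lambda>(x, y). x - y) -` {g} \<inter> ?P. 1)"
    unfolding diff_mset_def count_image_mset by (intro sum.cong) auto
  also have "(\<lambda>(x, y). x - y) -` {g} \<inter> ?P = {(x, y). x \<in> B \<and> y \<in> B \<and> x \<noteq> y \<and> x - y = g}"
    by auto
  finally show ?thesis
    by simp
qed

lemma count_diff_mset_zero: "count (diff_mset B) 0 = 0"
  by (simp add: diff_mset_def count_image_mset) (auto intro: sum.neutral)

lemma size_diff_mset: "size (diff_mset B) = card B * (card B - 1)"
proof (cases "finite B")
  case True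
  have "{(x, y). x \<in> B \<and> y \<in> B \<and> x \<noteq> y} = B \<times> B - (\<lambda>x. (x, x)) ` B"
    by auto
  moreover have "card ((\<lambda>x. (x, x)) ` B) = card B"
    by (rule card_image) (auto simp: inj_on_def)
  moreover have "(\<lambda>x. (x, x)) ` B \<subseteq> B \<times> B"
    by auto
  ultimately show ?thesis
    using True by (simp add: diff_mset_def card_Diff_subset card_cartesian_product diff_mult_distrib2)
next
  case False
  \<comment> \<open>both sides are 0: card B = 0, and mset_set is empty on the infinite set of pairs\<close>
  let ?S = "{(x, y). x \<in> B \<and> y \<in> B \<and> x \<noteq> y}"
  have "B \<subseteq> fst ` ?S"
  proof
    fix x
    assume "x \<in> B"
    obtain y where "y \<in> B - {x}"
      using False infinite_remove[of B x] by (metis ex_in_conv finite.emptyI)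
    with \<open>x \<in> B\<close> show "x \<in> fst ` ?S"
      by force
  qed
  then have "infinite ?S"
    using False finite_surj by blast
  then show ?thesis
    using False by (simp add: diff_mset_def)
qed

lemma even_count_diff_mset:
  fixes B :: "'a::group_add set"
  assumes "finite B" "- g = g"
  shows "even (count (diff_mset B) g)"
proof -
  have swapped: "y - x = g" if "x - y = g" for x y :: 'a
    using assms(2) that by (metis minus_diff_eq)
  show ?thesis
    unfolding count_diff_mset[OF assms(1)]
    by (rule even_card_if_fixpoint_free_involution[where h = prod.swap]) (auto, metis swapped)
qed

lemma size_diff_mset_family:
  "size (diff_mset_family t B) = (\<Sum>i<t. card (B i) * (card (B i) - 1))"
  by (simp add: diff_mset_family_def size_diff_mset)

lemma is_PDF_sum_block_sizes:
  fixes B :: "nat \<Rightarrow> 'a::{group_add,finite} set"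
  assumes "is_PDF t B k lam"
  shows "(\<Sum>i<t. k i) = card (UNIV :: 'a set)"
proof -
  have "card (\<Union>i<t. B i) = (\<Sum>i<t. card (B i))"
    using assms by (intro card_UN_disjoint) (auto simp: is_PDF_def)
  then show ?thesis
    using assms by (simp add: is_PDF_def)
qed

lemma is_PDF_sum_block_pairs:
  fixes B :: "nat \<Rightarrow> 'a::{group_add,finite} set"
  assumes "is_PDF t B k lam"
  shows "(\<Sum>i<t. k i * (k i - 1)) = lam * (card (UNIV :: 'a set) - 1)"
proof -
  let ?D = "diff_mset_family t B"
  have no_zero_difference: "count ?D 0 = 0"
    by (simp add: diff_mset_family_def count_sum count_diff_mset_zero)
  have "(\<Sum>i<t. k i * (k i - 1)) = size ?D"
    using assms by (simp add: size_diff_mset_family is_PDF_def)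
  also have "\<dots> = (\<Sum>g\<in>UNIV - {0}. count ?D g)"
    using no_zero_difference by (intro size_eq_sum_count) (auto simp: count_eq_zero_iff)
  also have "\<dots> = (\<Sum>g\<in>UNIV - {0::'a}. lam)"
    using assms by (intro sum.cong) (auto simp: is_PDF_def)
  finally show ?thesis
    by (simp add: card_Diff_subset)
qed

lemma is_PDF_even_lambda:
  fixes B :: "nat \<Rightarrow> 'a::{group_add,finite} set"
  assumes "is_PDF t B k lam" "even (card (UNIV :: 'a set))"
  shows "even lam"
proof -
  obtain g :: 'a where "g \<noteq> 0" "- g = g"
    using exists_order_two_if_even_card assms(2) by blast
  then have "count (diff_mset_family t B) g = lam"
    using assms(1) by (simp add: is_PDF_def)
  moreover have "even (count (diff_mset_family t B) g)"
    unfolding diff_mset_family_def count_sum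
    by (intro dvd_sum even_count_diff_mset \<open>- g = g\<close>) simp
  ultimately show ?thesis
    by simp
qed

theorem proposition3p1:
  fixes B :: "nat \<Rightarrow> 'a::{group_add,finite} set" and k :: "nat \<Rightarrow> nat"
    and t lam :: nat
  assumes "is_HPDF t B k lam"
  shows "(\<Sum>i<t. k i) = 2 * lam
    \<and> (\<Sum>i<t. (k i)^2) = lam * (2 * lam + 1)
    \<and> even lam
    \<and> card (UNIV :: 'a set) mod 4 = 0"
proof -
  have PDF: "is_PDF t B k lam" and card_G: "card (UNIV :: 'a set) = 2 * lam"
    using assms by (simp_all add: is_HPDF_def)
  have sizes: "(\<Sum>i<t. k i) = 2 * lam"
    using is_PDF_sum_block_sizes[OF PDF] card_G by simp
  have "(k i)^2 = k i * (k i - 1) + k i" for i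
    by (cases "k i") (simp_all add: power2_eq_square)
  then have "(\<Sum>i<t. (k i)^2) = (\<Sum>i<t. k i * (k i - 1)) + (\<Sum>i<t. k i)"
    by (simp add: sum.distrib)
  also have "\<dots> = lam * (2 * lam - 1) + 2 * lam"
    using is_PDF_sum_block_pairs[OF PDF] card_G sizes by simp
  also have "\<dots> = lam * (2 * lam + 1)"
    by (cases lam) (simp_all add: algebra_simps)
  finally have squares: "(\<Sum>i<t. (k i)^2) = lam * (2 * lam + 1)" .
  have "even lam"
    using is_PDF_even_lambda[OF PDF] card_G by simp
  then show ?thesis
    using sizes squares card_G by auto
qed

end
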